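(* Let $G=(V,E)$ be an undirected graph (not necessarily locally finite), let $X\subset V$ with $\mathrm{width}(X)<+\infty$, let $f:X\to\mathbb{R}$ with $f\ge 0$, and let $u,v:V\to\mathbb{R}$ satisfy $v\ge -C$ and $u\le C$ on $V$ for some constant $C>0$. Suppose that \[ -\Delta_\infty v(x)\ \ge\ f(x)\ \ge\ -\Delta_\infty u(x)\qquad\text{for all } x\in X. \] Then $\sup_{V}(u-v)=\sup_{V\setminus X}(u-v)$.
   Context: For $x,y\in V$ write $x\sim y$ if $\{x,y\}\in E$. The combinatorial distance $d(A,B)$ between subsets $A,B\subset V$ is the infimum of the lengths $n$ of paths $A\ni x_0\sim x_1\sim\cdots\sim x_n\in B$ (and $d(A,x)=d(A,\{x\})$). The boundary of $X$ is $\partial X=\{y\notin X:\ y\sim x \text{ for some } x\in X\}$, and $\mathrm{width}(X)=\sup_{x\in X} d(\partial X,x)$. For $w:V\to\mathbb{R}$ the discrete infinity Laplacian is $\Delta_\infty w(x)=\inf_{y\sim x}w(y)+\sup_{y\sim x}w(y)-2w(x)$ (infima and suprema taken in the extended reals). *)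

theory Defs
  imports "HOL-Analysis.Analysis" "HOL-Library.Extended_Nat"
begin

text \<open>A graph on the vertex type 'a (vertex set V = UNIV), given by an
  adjacency relation E: x \<sim> y iff E x y.\<close>

definition path_len :: "('a \<Rightarrow> 'a \<Rightarrow> bool) \<Rightarrow> 'a set \<Rightarrow> 'a set \<Rightarrow> nat \<Rightarrow> bool" where
  "path_len E A B n \<longleftrightarrow> (\<exists>p :: nat \<Rightarrow> 'a. p 0 \<in> A \<and> p n \<in> B \<and> (\<forall>i<n. E (p i) (p (Suc i))))"

text \<open>Combinatorial distance: infimum of lengths of paths from A to B (\<infinity> if none).\<close>
definition gdist :: "('a \<Rightarrow> 'a \<Rightarrow> bool) \<Rightarrow> 'a set \<Rightarrow> 'a set \<Rightarrow> enat" where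
  "gdist E A B = (INF n \<in> {n. path_len E A B n}. enat n)"

definition gboundary :: "('a \<Rightarrow> 'a \<Rightarrow> bool) \<Rightarrow> 'a set \<Rightarrow> 'a set" where
  "gboundary E X = {y. y \<notin> X \<and> (\<exists>x\<in>X. E y x)}"

definition gwidth :: "('a \<Rightarrow> 'a \<Rightarrow> bool) \<Rightarrow> 'a set \<Rightarrow> enat" where
  "gwidth E X = (SUP x \<in> X. gdist E (gboundary E X) {x})"

definition inf_laplacian :: "('a \<Rightarrow> 'a \<Rightarrow> bool) \<Rightarrow> ('a \<Rightarrow> real) \<Rightarrow> 'a \<Rightarrow> ereal" where
  "inf_laplacian E w x =
     (INF y \<in> {y. E x y}. ereal (w y)) + (SUP y \<in> {y. E x y}. ereal (w y)) - 2 * ereal (w x)"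

end

theory Submission
  imports Defs
begin

text \<open>Replace v by the smaller function v - \<epsilon> exp(-v), with \<epsilon> so small that
  the supremum M of w = u - (v - \<epsilon> exp(-v)) still exceeds w on V - X by a fixed
  amount. If x \<in> X has defect M - w(x) \<le> \<eta>, the two Laplacian inequalities at x,
  combined with the strict convexity of exp(-s), bound the oscillation of v around x
  by O(sqrt \<eta>), so every neighbour of x has defect at most K sqrt \<eta>. Along a path
  of length n \<le> width(X) from the boundary the defect therefore stays above
  \<eta>(n), where \<eta>(n+1) = (\<eta>(n) / K)^2; so the defect is at least \<eta>(W) > 0
  everywhere, contradicting the definition of M.\<close>

lemma SUP_ereal_eq_PInf_if_unbounded:
  fixes w :: "'a \<Rightarrow> real"
  assumes "\<not> bdd_above (w ` N)"
  shows "(SUP y\<in>N. ereal (w y)) = \<infinity>"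
proof -
  have "\<exists>y\<in>N. r < w y" for r
    using assms by (meson bdd_aboveI2 not_le)
  then have "\<exists>y\<in>N. x < ereal (w y)" if "x < \<infinity>" for x
    using that by (cases x) auto
  then show ?thesis
    unfolding top_ereal_def[symmetric] SUP_eq_top_iff by blast
qed

lemma INF_ereal_eq_MInf_if_unbounded:
  fixes w :: "'a \<Rightarrow> real"
  assumes "\<not> bdd_below (w ` N)"
  shows "(INF y\<in>N. ereal (w y)) = -\<infinity>"
proof -
  have "\<exists>y\<in>N. w y < r" for r
    using assms by (meson bdd_belowI2 not_le)
  then have "\<exists>y\<in>N. ereal (w y) < x" if "x > -\<infinity>" for x
    using that by (cases x) auto
  then show ?thesis
    unfolding bot_ereal_def[symmetric] INF_eq_bot_iff by blast
qed

lemma inf_laplacian_eq_real: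
  fixes E :: "'a \<Rightarrow> 'a \<Rightarrow> bool" and x :: 'a and w :: "'a \<Rightarrow> real"
  defines "N \<equiv> {y. E x y}"
  assumes "N \<noteq> {}" "bdd_below (w ` N)" "bdd_above (w ` N)"
  shows "inf_laplacian E w x = ereal (Inf (w ` N) + Sup (w ` N) - 2 * w x)"
proof -
  have "(INF y\<in>N. ereal (w y)) = ereal (Inf (w ` N))"
    using ereal_Inf'[of "w ` N"] assms by (simp add: image_comp)
  moreover have "(SUP y\<in>N. ereal (w y)) = ereal (Sup (w ` N))"
    using continuous_at_Sup_mono[of ereal "w ` N"] assms
    by (simp add: image_comp mono_def continuous_at_imp_continuous_at_within continuous_at_ereal)
  ultimately show ?thesis
    unfolding inf_laplacian_def N_def by simp
qed

lemma inf_laplacian_supersolution_real: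
  fixes E :: "'a \<Rightarrow> 'a \<Rightarrow> bool" and x :: 'a and v :: "'a \<Rightarrow> real"
  defines "N \<equiv> {y. E x y}"
  assumes bdd: "bdd_below (v ` N)" and super: "ereal c \<le> - inf_laplacian E v x"
  shows "N \<noteq> {}" "bdd_above (v ` N)" "Inf (v ` N) + Sup (v ` N) - 2 * v x \<le> - c"
proof -
  have finite: "inf_laplacian E v x \<noteq> \<infinity>"
    using super by auto
  (* An isolated vertex has inf_laplacian \<infinity>, since \<infinity> + -\<infinity> = \<infinity> in ereal. *)
  show ne: "N \<noteq> {}"
  proof
    assume "N = {}"
    then show False
      using finite by (simp add: inf_laplacian_def N_def top_ereal_def)
  qed
  obtain m where "\<And>y. y \<in> N \<Longrightarrow> m \<le> v y"
    using bdd by (auto simp: bdd_below_def)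
  then have INF_bound: "ereal m \<le> (INF y\<in>N. ereal (v y))"
    by (auto intro: INF_greatest)
  show bdd_above: "bdd_above (v ` N)"
  proof (rule ccontr)
    assume "\<not> bdd_above (v ` N)"
    then have "inf_laplacian E v x = \<infinity>"
      using INF_bound SUP_ereal_eq_PInf_if_unbounded[of v N]
      unfolding inf_laplacian_def N_def by (cases "(INF y\<in>N. ereal (v y))") (auto simp: N_def)
    then show False
      using finite by simp
  qed
  show "Inf (v ` N) + Sup (v ` N) - 2 * v x \<le> - c"
    using super inf_laplacian_eq_real[of E x v] ne bdd bdd_above
    by (simp add: N_def ereal_minus_le_iff)
qed

lemma inf_laplacian_subsolution_real:
  fixes E :: "'a \<Rightarrow> 'a \<Rightarrow> bool" and x :: 'a and u :: "'a \<Rightarrow> real"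
  defines "N \<equiv> {y. E x y}"
  assumes ne: "N \<noteq> {}" and bdd: "bdd_above (u ` N)" and sub: "- inf_laplacian E u x \<le> ereal c"
  shows "bdd_below (u ` N)" "- c \<le> Inf (u ` N) + Sup (u ` N) - 2 * u x"
proof -
  obtain m where "\<And>y. y \<in> N \<Longrightarrow> u y \<le> m"
    using bdd by (auto simp: bdd_above_def)
  then have SUP_bound: "(SUP y\<in>N. ereal (u y)) \<le> ereal m"
    by (auto intro: SUP_least)
  show bdd_below: "bdd_below (u ` N)"
  proof (rule ccontr)
    assume "\<not> bdd_below (u ` N)"
    then have "inf_laplacian E u x = -\<infinity>"
      using SUP_bound INF_ereal_eq_MInf_if_unbounded[of u N]
      unfolding inf_laplacian_def N_def by (cases "(SUP y\<in>N. ereal (u y))") (auto simp: N_def)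
    then show False
      using sub by simp
  qed
  show "- c \<le> Inf (u ` N) + Sup (u ` N) - 2 * u x"
    using sub inf_laplacian_eq_real[of E x u] ne bdd bdd_below
    by (simp add: N_def ereal_minus_le_iff)
qed

definition exp_perturb :: "real \<Rightarrow> real \<Rightarrow> real" where
  "exp_perturb \<epsilon> s = s - \<epsilon> * exp (- s)"

lemma mono_exp_perturb: "0 \<le> \<epsilon> \<Longrightarrow> mono (exp_perturb \<epsilon>)"
  unfolding exp_perturb_def by (intro monoI) (smt (verit) exp_le_cancel_iff mult_left_mono)

lemma exp_perturb_Inf:
  assumes "0 \<le> \<epsilon>" "S \<noteq> {}" "bdd_below S"
  shows "exp_perturb \<epsilon> (Inf S) = Inf (exp_perturb \<epsilon> ` S)"
  using assms
  by (intro continuous_at_Inf_mono mono_exp_perturb)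
    (auto simp: exp_perturb_def intro!: continuous_intros)

lemma exp_plus_exp_minus_ge:
  fixes a b :: real
  assumes "0 \<le> b" "a \<le> b"
  shows "2 + b\<^sup>2 / 2 \<le> exp b + exp (- a)"
proof -
  have "1 - b \<le> exp (- b)" "exp (- b) \<le> exp (- a)"
    using exp_ge_add_one_self[of "- b"] assms(2) by auto
  then show ?thesis
    using exp_lower_Taylor_quadratic[OF assms(1)] by linarith
qed

lemma perturbed_defect_step_real:
  fixes Iu Su Iv Sv ux vx uy vy M c \<epsilon> \<eta> :: real
  assumes super: "Iv + Sv - 2 * vx \<le> - c" and sub: "- c \<le> Iu + Su - 2 * ux" and "0 \<le> c"
    and "Iv \<le> Sv" and "0 < \<epsilon>"
    and Iu: "Iu \<le> M + exp_perturb \<epsilon> Iv" and Su: "Su \<le> M + exp_perturb \<epsilon> Sv"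
    and x: "M - (ux - exp_perturb \<epsilon> vx) \<le> \<eta>"
    and y: "Iu \<le> uy" "vy \<le> Sv"
  shows "M - (uy - exp_perturb \<epsilon> vy)
    \<le> 2 * \<eta> + (2 + 2 * \<epsilon> * exp (- vx)) * sqrt (4 * \<eta> * exp vx / \<epsilon>)"
proof -
  define a where "a = Sv - vx"
  define b where "b = vx - Iv"
  have "a \<le> b" "0 \<le> b"
    using super \<open>0 \<le> c\<close> \<open>Iv \<le> Sv\<close> unfolding a_def b_def by auto
  have exp_Iv: "exp (- Iv) = exp (- vx) * exp b" and exp_Sv: "exp (- Sv) = exp (- vx) * exp (- a)"
    unfolding a_def b_def by (simp_all flip: exp_add)
  have gap: "\<epsilon> * (exp (- Iv) + exp (- Sv)) \<le> 2 * \<eta> + 2 * (\<epsilon> * exp (- vx))"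
    using super sub Iu Su x unfolding exp_perturb_def distrib_left by linarith
  have "exp (- vx) * (2 + b\<^sup>2 / 2) \<le> exp (- Iv) + exp (- Sv)"
    unfolding exp_Iv exp_Sv distrib_left[symmetric]
    using exp_plus_exp_minus_ge[OF \<open>0 \<le> b\<close> \<open>a \<le> b\<close>] by simp
  then have "\<epsilon> * (exp (- vx) * (2 + b\<^sup>2 / 2)) \<le> \<epsilon> * (exp (- Iv) + exp (- Sv))"
    using \<open>0 < \<epsilon>\<close> by (intro mult_left_mono) auto
  with gap have "\<epsilon> * exp (- vx) * b\<^sup>2 \<le> 4 * \<eta>"
    by (simp add: algebra_simps)
  then have "b\<^sup>2 * \<epsilon> \<le> 4 * \<eta> * exp vx"
    using mult_right_mono[of _ _ "exp vx"] by (simp add: exp_minus field_simps)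
  then have "b\<^sup>2 \<le> 4 * \<eta> * exp vx / \<epsilon>"
    using \<open>0 < \<epsilon>\<close> by (simp add: pos_le_divide_eq)
  then have b_bound: "b \<le> sqrt (4 * \<eta> * exp vx / \<epsilon>)"
    using real_sqrt_le_mono \<open>0 \<le> b\<close> by fastforce
  have "exp (- vx) * (1 - a) \<le> exp (- Sv)"
    using exp_ge_add_one_self[of "- a"] unfolding exp_Sv by simp
  moreover have "exp (- vx) * a \<le> exp (- vx) * b"
    using \<open>a \<le> b\<close> by simp
  ultimately have "exp (- vx) - exp (- Sv) \<le> exp (- vx) * b"
    unfolding right_diff_distrib by linarith
  from mult_left_mono[OF this less_imp_le[OF \<open>0 < \<epsilon>\<close>]]
  have "\<epsilon> * exp (- vx) - \<epsilon> * exp (- Sv) \<le> \<epsilon> * exp (- vx) * b"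
    by (simp only: right_diff_distrib mult.assoc)
  moreover have "exp_perturb \<epsilon> vy \<le> exp_perturb \<epsilon> Sv"
    using mono_exp_perturb \<open>0 < \<epsilon>\<close> y(2) by (simp add: monoD)
  ultimately have "M - (uy - exp_perturb \<epsilon> vy) \<le> 2 * \<eta> + 2 * b + 2 * (\<epsilon> * exp (- vx) * b)"
    using sub super Su x y(1) \<open>a \<le> b\<close> a_def b_def unfolding exp_perturb_def by linarith
  also have "\<dots> = 2 * \<eta> + (2 + 2 * \<epsilon> * exp (- vx)) * b"
    by (simp add: algebra_simps)
  also have "\<dots> \<le> 2 * \<eta> + (2 + 2 * \<epsilon> * exp (- vx)) * sqrt (4 * \<eta> * exp vx / \<epsilon>)"
    using b_bound \<open>0 < \<epsilon>\<close> by (intro add_left_mono mult_left_mono) auto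
  finally show ?thesis .
qed

lemma perturbed_defect_step_nbhd:
  fixes u v :: "'a \<Rightarrow> real"
  assumes "N \<noteq> {}" "bdd_below (u ` N)" "bdd_below (v ` N)" "bdd_above (v ` N)"
    and super: "Inf (v ` N) + Sup (v ` N) - 2 * v x \<le> - c"
    and sub: "- c \<le> Inf (u ` N) + Sup (u ` N) - 2 * u x"
    and "0 \<le> c" "0 < \<epsilon>"
    and below: "\<And>z. z \<in> N \<Longrightarrow> u z - exp_perturb \<epsilon> (v z) \<le> M"
    and x: "M - (u x - exp_perturb \<epsilon> (v x)) \<le> \<eta>"
    and "y \<in> N"
  shows "M - (u y - exp_perturb \<epsilon> (v y))
    \<le> 2 * \<eta> + (2 + 2 * \<epsilon> * exp (- v x)) * sqrt (4 * \<eta> * exp (v x) / \<epsilon>)"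
proof (rule perturbed_defect_step_real[OF super sub \<open>0 \<le> c\<close> _ \<open>0 < \<epsilon>\<close> _ _ x])
  show "Inf (v ` N) \<le> Sup (v ` N)"
    using assms(1,3,4) by (simp add: cInf_le_cSup)
  have "Inf (u ` N) - M \<le> exp_perturb \<epsilon> (v z)" if "z \<in> N" for z
    using below[OF that] cInf_lower[OF imageI[OF that] assms(2)] by simp
  then have "Inf (u ` N) - M \<le> Inf (exp_perturb \<epsilon> ` v ` N)"
    using assms(1) by (auto intro: cInf_greatest)
  then show "Inf (u ` N) \<le> M + exp_perturb \<epsilon> (Inf (v ` N))"
    using exp_perturb_Inf[of \<epsilon> "v ` N"] assms(1,3) \<open>0 < \<epsilon>\<close> by simp
  have "u z \<le> M + exp_perturb \<epsilon> (Sup (v ` N))" if "z \<in> N" for z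
    using below[OF that] monoD[OF mono_exp_perturb cSup_upper[OF imageI[OF that] assms(4)], of \<epsilon>]
      \<open>0 < \<epsilon>\<close> by simp
  then show "Sup (u ` N) \<le> M + exp_perturb \<epsilon> (Sup (v ` N))"
    using assms(1) by (auto intro: cSup_least)
  show "Inf (u ` N) \<le> u y" "v y \<le> Sup (v ` N)"
    using assms(2,4) \<open>y \<in> N\<close> by (auto intro: cInf_lower cSup_upper)
qed

lemma perturbed_defect_sqrt_step:
  fixes E :: "'a \<Rightarrow> 'a \<Rightarrow> bool" and f u v :: "'a \<Rightarrow> real"
  assumes f_nonneg: "\<And>x. x \<in> X \<Longrightarrow> f x \<ge> 0"
    and v_lb: "\<And>x. v x \<ge> - C"
    and u_ub: "\<And>x. u x \<le> C"
    and super: "\<And>x. x \<in> X \<Longrightarrow> - inf_laplacian E v x \<ge> ereal (f x)"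
    and sub: "\<And>x. x \<in> X \<Longrightarrow> ereal (f x) \<ge> - inf_laplacian E u x"
    and "0 < \<epsilon>"
    and below: "\<And>z. u z - exp_perturb \<epsilon> (v z) \<le> M"
  obtains K where "1 \<le> K"
    and "\<And>x y \<eta>. x \<in> X \<Longrightarrow> E x y \<Longrightarrow> 0 \<le> \<eta> \<Longrightarrow> \<eta> \<le> 1 \<Longrightarrow>
      M - (u x - exp_perturb \<epsilon> (v x)) \<le> \<eta> \<Longrightarrow> M - (u y - exp_perturb \<epsilon> (v y)) \<le> K * sqrt \<eta>"
proof -
  define V where "V = C + \<epsilon> * exp C - M + 1"
  define K where "K = 2 + (2 + 2 * \<epsilon> * exp C) * sqrt (4 * exp V / \<epsilon>)"
  have "1 \<le> K"
    using \<open>0 < \<epsilon>\<close> unfolding K_def by (simp add: add_nonneg_nonneg)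
  moreover have "M - (u y - exp_perturb \<epsilon> (v y)) \<le> K * sqrt \<eta>"
    if "x \<in> X" "E x y" "0 \<le> \<eta>" "\<eta> \<le> 1" and x: "M - (u x - exp_perturb \<epsilon> (v x)) \<le> \<eta>" for x y \<eta>
  proof -
    let ?N = "{y. E x y}"
    have v_bdd: "bdd_below (v ` ?N)"
      using v_lb by (auto intro: bdd_belowI[of _ "- C"])
    note super_x = inf_laplacian_supersolution_real[OF v_bdd super[OF \<open>x \<in> X\<close>]]
    have "bdd_above (u ` ?N)"
      using u_ub by (auto intro: bdd_aboveI[of _ C])
    note sub_x = inf_laplacian_subsolution_real[OF super_x(1) this sub[OF \<open>x \<in> X\<close>]]
    have exp_vx: "exp (- v x) \<le> exp C"
      using v_lb[of x] by simp
    have "\<epsilon> * exp (- v x) \<le> \<epsilon> * exp C"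
      using exp_vx \<open>0 < \<epsilon>\<close> by simp
    then have "v x \<le> V"
      using x \<open>\<eta> \<le> 1\<close> u_ub[of x] unfolding V_def exp_perturb_def by linarith
    then have "4 * \<eta> * exp (v x) / \<epsilon> \<le> 4 * \<eta> * exp V / \<epsilon>"
      using \<open>0 \<le> \<eta>\<close> \<open>0 < \<epsilon>\<close> by (intro divide_right_mono mult_left_mono) auto
    also have "\<dots> = 4 * exp V / \<epsilon> * \<eta>"
      by simp
    finally have sqrt_bound: "sqrt (4 * \<eta> * exp (v x) / \<epsilon>) \<le> sqrt (4 * exp V / \<epsilon>) * sqrt \<eta>"
      by (metis real_sqrt_le_mono real_sqrt_mult)
    have "\<eta> \<le> sqrt \<eta>"
      using \<open>0 \<le> \<eta>\<close> \<open>\<eta> \<le> 1\<close> by (simp add: real_le_rsqrt power2_eq_square mult_left_le)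
    have "M - (u y - exp_perturb \<epsilon> (v y))
        \<le> 2 * \<eta> + (2 + 2 * \<epsilon> * exp (- v x)) * sqrt (4 * \<eta> * exp (v x) / \<epsilon>)"
      using perturbed_defect_step_nbhd[OF super_x(1) sub_x(1) v_bdd super_x(2,3) sub_x(2)
          f_nonneg[OF \<open>x \<in> X\<close>] \<open>0 < \<epsilon>\<close> below x] \<open>E x y\<close> by simp
    also have "\<dots> \<le> 2 * sqrt \<eta> + (2 + 2 * \<epsilon> * exp C) * (sqrt (4 * exp V / \<epsilon>) * sqrt \<eta>)"
      using \<open>\<eta> \<le> sqrt \<eta>\<close> sqrt_bound exp_vx \<open>0 \<le> \<eta>\<close> \<open>0 < \<epsilon>\<close>
      by (intro add_mono mult_mono) auto
    also have "\<dots> = K * sqrt \<eta>"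
      unfolding K_def by (simp add: algebra_simps)
    finally show ?thesis .
  qed
  ultimately show thesis
    by (rule that)
qed

lemma path_within_width:
  assumes "gwidth E X \<le> enat W" "x \<in> X"
  shows "\<exists>n \<le> W. path_len E (gboundary E X) {x} n"
proof (rule ccontr)
  assume "\<not> ?thesis"
  then have "enat (Suc W) \<le> gdist E (gboundary E X) {x}"
    unfolding gdist_def using not_less_eq_eq by (intro INF_greatest) fastforce
  also have "\<dots> \<le> gwidth E X"
    unfolding gwidth_def using \<open>x \<in> X\<close> by (intro SUP_upper)
  finally have "enat (Suc W) \<le> enat W"
    using assms(1) by (rule order_trans)
  then show False
    by simp
qed

lemma sqrt_recursion_sequence:
  fixes K \<eta>\<^sub>0 :: real
  assumes "1 \<le> K" "0 < \<eta>\<^sub>0" "\<eta>\<^sub>0 \<le> 1"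
  obtains \<eta> :: "nat \<Rightarrow> real"
  where "\<eta> 0 = \<eta>\<^sub>0" "\<And>n. 0 < \<eta> n" "decseq \<eta>" "\<And>n. K * sqrt (\<eta> (Suc n)) = \<eta> n"
proof -
  define \<eta> where "\<eta> n = ((\<lambda>e. (e / K)\<^sup>2) ^^ n) \<eta>\<^sub>0" for n
  have \<eta>_Suc: "\<eta> (Suc n) = (\<eta> n / K)\<^sup>2" for n
    unfolding \<eta>_def by simp
  have pos: "0 < \<eta> n" for n
    using assms by (induction n) (auto simp: \<eta>_Suc \<eta>_def)
  have shrink: "(e / K)\<^sup>2 \<le> e" if "0 \<le> e" "e \<le> 1" for e
  proof -
    have "e / K \<le> 1" "0 \<le> e / K" "e / K \<le> e"
      using that assms(1) by (auto simp: divide_le_eq mult_le_cancel_left1)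
    then have "(e / K) * (e / K) \<le> e"
      using mult_left_le[of "e / K" "e / K"] by linarith
    then show ?thesis
      by (simp only: power2_eq_square)
  qed
  have le_1: "\<eta> n \<le> 1" for n
  proof (induction n)
    case 0
    then show ?case
      using assms by (simp add: \<eta>_def)
  next
    case (Suc n)
    then show ?case
      using shrink[OF less_imp_le[OF pos[of n]] Suc.IH] unfolding \<eta>_Suc by linarith
  qed
  show ?thesis
  proof
    show "\<eta> 0 = \<eta>\<^sub>0"
      by (simp add: \<eta>_def)
    show "decseq \<eta>"
      using shrink pos le_1 by (intro decseq_SucI) (simp add: \<eta>_Suc less_imp_le)
    show "K * sqrt (\<eta> (Suc n)) = \<eta> n" for n
      using pos[of n] assms(1) by (simp add: \<eta>_Suc real_sqrt_divide)
  qed (fact pos)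
qed

lemma sqrt_step_exceeds_along_path:
  fixes D :: "'a \<Rightarrow> real" and \<eta> :: "nat \<Rightarrow> real"
  assumes sym: "\<And>x y. E x y \<Longrightarrow> E y x"
    and outside: "\<And>n y. y \<notin> X \<Longrightarrow> \<eta> n < D y"
    and \<eta>_range: "\<And>n. 0 \<le> \<eta> n" "\<And>n. \<eta> n \<le> 1"
    and \<eta>_rec: "\<And>n. K * sqrt (\<eta> (Suc n)) = \<eta> n"
    and step: "\<And>x y t. x \<in> X \<Longrightarrow> E x y \<Longrightarrow> 0 \<le> t \<Longrightarrow> t \<le> 1 \<Longrightarrow> D x \<le> t \<Longrightarrow> D y \<le> K * sqrt t"
    and path: "p 0 \<in> gboundary E X" "\<forall>i<n. E (p i) (p (Suc i))"
  shows "\<eta> n < D (p n)"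
  using path(2)
proof (induction n)
  case 0
  then show ?case
    using path(1) outside by (simp add: gboundary_def)
next
  case (Suc n)
  then have IH: "\<eta> n < D (p n)"
    by simp
  show ?case
  proof (rule ccontr)
    assume "\<not> \<eta> (Suc n) < D (p (Suc n))"
    then have "p (Suc n) \<in> X" "D (p (Suc n)) \<le> \<eta> (Suc n)"
      using outside by force+
    moreover have "E (p (Suc n)) (p n)"
      using Suc.prems sym by blast
    ultimately have "D (p n) \<le> \<eta> n"
      using step \<eta>_range \<eta>_rec by metis
    then show False
      using IH by simp
  qed
qed

lemma sqrt_step_lower_bound:
  fixes D :: "'a \<Rightarrow> real"
  assumes sym: "\<And>x y. E x y \<Longrightarrow> E y x"
    and width: "gwidth E X < \<infinity>"
    and "1 \<le> K" "0 < \<theta>"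
    and outside: "\<And>y. y \<notin> X \<Longrightarrow> \<theta> \<le> D y"
    and step: "\<And>x y t. x \<in> X \<Longrightarrow> E x y \<Longrightarrow> 0 \<le> t \<Longrightarrow> t \<le> 1 \<Longrightarrow> D x \<le> t \<Longrightarrow> D y \<le> K * sqrt t"
  shows "\<exists>\<eta>>0. \<forall>x. \<eta> \<le> D x"
proof -
  obtain \<eta> where \<eta>: "\<eta> 0 = min 1 (\<theta> / 2)" "\<And>n. 0 < \<eta> n" "decseq \<eta>" "\<And>n. K * sqrt (\<eta> (Suc n)) = \<eta> n"
    using sqrt_recursion_sequence[of K "min 1 (\<theta> / 2)"] \<open>1 \<le> K\<close> \<open>0 < \<theta>\<close> by auto
  have \<eta>_le: "\<eta> n \<le> 1" "\<eta> n \<le> \<theta> / 2" for n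
    using decseqD[OF \<eta>(3), of 0 n] \<eta>(1) by simp_all
  have \<eta>_outside: "\<eta> n < D y" if "y \<notin> X" for n y
    using outside[OF that] \<eta>_le(2)[of n] \<open>0 < \<theta>\<close> by linarith
  obtain W where W: "gwidth E X = enat W"
    using width by (cases "gwidth E X") auto
  have "\<eta> W \<le> D x" for x
  proof (cases "x \<in> X")
    case False
    then show ?thesis
      using \<eta>_outside by (simp add: less_imp_le)
  next
    case True
    then obtain n p where "n \<le> W" and path: "p 0 \<in> gboundary E X" "\<forall>i<n. E (p i) (p (Suc i))"
      and "p n = x"
      using path_within_width[of E X W x] W unfolding path_len_def by auto
    moreover have "\<eta> n < D (p n)"
      by (rule sqrt_step_exceeds_along_path[where E = E and X = X and \<eta> = \<eta> and D = D and K = K,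
            OF sym \<eta>_outside less_imp_le[OF \<eta>(2)] \<eta>_le(1) \<eta>(4) step path])
    ultimately show ?thesis
      using decseqD[OF \<eta>(3), of n W] by simp
  qed
  then show ?thesis
    using \<eta>(2) by blast
qed

lemma SUP_ereal_eq_if_bounds_transfer:
  fixes h :: "'a \<Rightarrow> real"
  assumes transfer: "\<And>r x. (\<And>y. y \<in> B \<Longrightarrow> h y \<le> r) \<Longrightarrow> h x \<le> r"
  shows "(SUP x. ereal (h x)) = (SUP x \<in> B. ereal (h x))"
proof (rule antisym)
  show "(SUP x \<in> B. ereal (h x)) \<le> (SUP x. ereal (h x))"
    by (rule SUP_subset_mono) auto
  have "ereal (h x) \<le> (SUP y \<in> B. ereal (h y))" for x
  proof (cases "SUP y \<in> B. ereal (h y)")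
    case (real r)
    then have "h y \<le> r" if "y \<in> B" for y
      using SUP_upper[OF that, of "\<lambda>y. ereal (h y)"] by simp
    then show ?thesis
      using transfer real by simp
  next
    case MInf
    then have "h y \<le> h x - 1" if "y \<in> B" for y
      using SUP_upper[OF that, of "\<lambda>y. ereal (h y)"] by simp
    then show ?thesis
      using transfer[of "h x - 1" x] by simp
  qed simp
  then show "(SUP x. ereal (h x)) \<le> (SUP x \<in> B. ereal (h x))"
    by (rule SUP_least)
qed

lemma perturbed_sup_approached_outside:
  fixes E :: "'a \<Rightarrow> 'a \<Rightarrow> bool" and f u v :: "'a \<Rightarrow> real" and \<epsilon> :: real
  defines "w \<equiv> \<lambda>y. u y - exp_perturb \<epsilon> (v y)"
  assumes sym: "\<And>x y. E x y \<Longrightarrow> E y x"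
    and width: "gwidth E X < \<infinity>"
    and f_nonneg: "\<And>x. x \<in> X \<Longrightarrow> f x \<ge> 0"
    and v_lb: "\<And>x. v x \<ge> - C"
    and u_ub: "\<And>x. u x \<le> C"
    and super: "\<And>x. x \<in> X \<Longrightarrow> - inf_laplacian E v x \<ge> ereal (f x)"
    and sub: "\<And>x. x \<in> X \<Longrightarrow> ereal (f x) \<ge> - inf_laplacian E u x"
    and "0 < \<epsilon>" "bdd_above (range w)" "0 < \<theta>"
  shows "\<exists>y. y \<notin> X \<and> Sup (range w) - \<theta> < w y"
proof (rule ccontr)
  assume "\<not> ?thesis"
  then have defect_outside: "\<theta> \<le> Sup (range w) - w y" if "y \<notin> X" for y
    using that by force
  have below: "\<And>z. u z - exp_perturb \<epsilon> (v z) \<le> Sup (range w)"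
    using \<open>bdd_above (range w)\<close> unfolding w_def by (auto intro: cSup_upper)
  obtain K where "1 \<le> K" and step: "\<And>x y t. x \<in> X \<Longrightarrow> E x y \<Longrightarrow> 0 \<le> t \<Longrightarrow> t \<le> 1 \<Longrightarrow>
      Sup (range w) - w x \<le> t \<Longrightarrow> Sup (range w) - w y \<le> K * sqrt t"
    using perturbed_defect_sqrt_step[OF f_nonneg v_lb u_ub super sub \<open>0 < \<epsilon>\<close> below]
    unfolding w_def by blast
  have "\<exists>\<eta>>0. \<forall>y. \<eta> \<le> Sup (range w) - w y"
    by (rule sqrt_step_lower_bound[where E = E and X = X and K = K
          and D = "\<lambda>y. Sup (range w) - w y"])
      (use sym width \<open>1 \<le> K\<close> \<open>0 < \<theta>\<close> defect_outside step in auto)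
  then obtain \<eta> where "0 < \<eta>" "\<And>y. w y \<le> Sup (range w) - \<eta>"
    by (auto simp: algebra_simps)
  then have "Sup (range w) \<le> Sup (range w) - \<eta>"
    by (intro cSup_least) auto
  then show False
    using \<open>0 < \<eta>\<close> by simp
qed

lemma comparison_principle:
  fixes E :: "'a \<Rightarrow> 'a \<Rightarrow> bool" and f u v :: "'a \<Rightarrow> real"
  assumes sym: "\<And>x y. E x y \<Longrightarrow> E y x"
    and width: "gwidth E X < \<infinity>"
    and f_nonneg: "\<And>x. x \<in> X \<Longrightarrow> f x \<ge> 0"
    and v_lb: "\<And>x. v x \<ge> - C"
    and u_ub: "\<And>x. u x \<le> C"
    and super: "\<And>x. x \<in> X \<Longrightarrow> - inf_laplacian E v x \<ge> ereal (f x)"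
    and sub: "\<And>x. x \<in> X \<Longrightarrow> ereal (f x) \<ge> - inf_laplacian E u x"
    and outside: "\<And>y. y \<notin> X \<Longrightarrow> u y - v y \<le> r"
  shows "u x - v x \<le> r"
proof (rule ccontr)
  assume "\<not> u x - v x \<le> r"
  define \<delta> where "\<delta> = u x - v x - r"
  define \<epsilon> where "\<epsilon> = \<delta> / (4 * exp C)"
  define w where "w y = u y - exp_perturb \<epsilon> (v y)" for y
  have "0 < \<delta>" "0 < \<epsilon>"
    using \<open>\<not> u x - v x \<le> r\<close> unfolding \<delta>_def \<epsilon>_def by auto
  have perturbation_small: "\<epsilon> * exp (- v y) \<le> \<delta> / 4" for y
    using mult_left_mono[of "exp (- v y)" "exp C" \<epsilon>] v_lb[of y] \<open>0 < \<epsilon>\<close> unfolding \<epsilon>_def by simp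
  have "w y \<le> 2 * C + \<delta> / 4" for y
    using u_ub[of y] v_lb[of y] perturbation_small[of y] unfolding w_def exp_perturb_def by linarith
  then have bdd: "bdd_above (range w)"
    by (auto intro: bdd_aboveI[of _ "2 * C + \<delta> / 4"])
  then obtain y where "y \<notin> X" "Sup (range w) - 3 * \<delta> / 4 < w y"
    using perturbed_sup_approached_outside[OF sym width f_nonneg v_lb u_ub super sub \<open>0 < \<epsilon>\<close>,
        of "3 * \<delta> / 4"] \<open>0 < \<delta>\<close> unfolding w_def by auto
  moreover have "w y \<le> r + \<delta> / 4"
    using outside[OF \<open>y \<notin> X\<close>] perturbation_small[of y] unfolding w_def exp_perturb_def by linarith
  moreover have "r + \<delta> \<le> w x"
    using \<open>0 < \<epsilon>\<close> unfolding w_def exp_perturb_def \<delta>_def by simp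
  moreover have "w x \<le> Sup (range w)"
    using bdd by (rule cSup_upper[OF rangeI])
  ultimately show False
    by linarith
qed

theorem theorem1p2:
  fixes E :: "'a \<Rightarrow> 'a \<Rightarrow> bool"
    and X :: "'a set"
    and f u v :: "'a \<Rightarrow> real"
    and C :: real
  assumes sym: "\<And>x y. E x y \<Longrightarrow> E y x"
    and irrefl: "\<And>x. \<not> E x x"
    and width: "gwidth E X < \<infinity>"
    and f_nonneg: "\<And>x. x \<in> X \<Longrightarrow> f x \<ge> 0"
    and C_pos: "C > 0"
    and v_lb: "\<And>x. v x \<ge> - C"
    and u_ub: "\<And>x. u x \<le> C"
    and super: "\<And>x. x \<in> X \<Longrightarrow> - inf_laplacian E v x \<ge> ereal (f x)"
    and sub: "\<And>x. x \<in> X \<Longrightarrow> ereal (f x) \<ge> - inf_laplacian E u x"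
  shows "(SUP x. ereal (u x - v x)) = (SUP x \<in> UNIV - X. ereal (u x - v x))"
  using comparison_principle[OF sym width f_nonneg v_lb u_ub super sub]
  by (intro SUP_ereal_eq_if_bounds_transfer) blast

end
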